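(* Let $p$ be even, $V=\{1,\dots,p\}$, and $\tau$ a twin-pairing function on $V$. The number of pdCGs (equivalently, of RCON models for paired data) on $V$ is $$|\mathcal{P}(V)|=2^{p/2}\sum_{i=0}^{p(p-2)/4}\binom{p(p-2)/4}{i}\,2^{\binom{p}{2}-2i}.$$
   Context: A twin-pairing function is a map $\tau:V\to V$ such that $\tau(i)=j$ implies $\tau(j)=i$ and there is a partition $V=L\cup R$, $L\cap R=\emptyset$, with $\tau(L)=R$ (so $|L|=|R|=p/2$). Let $F_V=\{(i,j)\mid i,j\in V,\ i<j\}$ and extend $\tau$ to edges by $\tau(i,j)=(\tau(i),\tau(j))$, endpoints reordered to lie in $F_V$. A coloured graph with vertex set $V$ is a pair $(\mathcal{V},\mathcal{E})$ where $\mathcal{V}$ is a partition of $V$ and $\mathcal{E}$ is a partition of some edge set $E\subseteq F_V$. A colour class is atomic if it has exactly one element and twin-pairing if it is of the form $\{i,\tau(i)\}$ or $\{(i,j),\tau(i,j)\}$ with $(i,j)\neq\tau(i,j)$. A pdCG (coloured graph for paired data) is a coloured graph in which every colour class is atomic or twin-pairing; $\mathcal{P}(V)$ is the set of pdCGs on $V$. Each pdCG $\mathcal{G}$ defines the RCON model of normal distributions on $\mathbb{R}^V$ whose concentration matrix has zero entries for non-edges and equal entries within each colour class, and distinct pdCGs define distinct models. *)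

theory Defs
  imports Main "HOL-Library.Disjoint_Sets"
begin

definition twin_pairing :: "nat set \<Rightarrow> (nat \<Rightarrow> nat) \<Rightarrow> bool" where
  "twin_pairing V \<tau> \<longleftrightarrow>
     (\<forall>i\<in>V. \<tau> i \<in> V \<and> \<tau> (\<tau> i) = i) \<and>
     (\<exists>L R. L \<union> R = V \<and> L \<inter> R = {} \<and> \<tau> ` L = R)"

definition F_V :: "nat set \<Rightarrow> (nat \<times> nat) set" where
  "F_V V = {(i, j). i \<in> V \<and> j \<in> V \<and> i < j}"

definition tau_edge :: "(nat \<Rightarrow> nat) \<Rightarrow> nat \<times> nat \<Rightarrow> nat \<times> nat" where
  "tau_edge \<tau> e = (min (\<tau> (fst e)) (\<tau> (snd e)), max (\<tau> (fst e)) (\<tau> (snd e)))"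

definition coloured_graph :: "nat set \<Rightarrow> nat set set \<times> (nat \<times> nat) set set \<Rightarrow> bool" where
  "coloured_graph V G \<longleftrightarrow>
     partition_on V (fst G) \<and> (\<exists>E. E \<subseteq> F_V V \<and> partition_on E (snd G))"

definition pdCG :: "(nat \<Rightarrow> nat) \<Rightarrow> nat set \<Rightarrow> nat set set \<times> (nat \<times> nat) set set \<Rightarrow> bool" where
  "pdCG \<tau> V G \<longleftrightarrow> coloured_graph V G \<and>
     (\<forall>c\<in>fst G. (\<exists>i. c = {i}) \<or> (\<exists>i. c = {i, \<tau> i} \<and> i \<noteq> \<tau> i)) \<and>
     (\<forall>c\<in>snd G. (\<exists>e. c = {e}) \<or> (\<exists>e. c = {e, tau_edge \<tau> e} \<and> e \<noteq> tau_edge \<tau> e))"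

definition pdCGs :: "(nat \<Rightarrow> nat) \<Rightarrow> nat set \<Rightarrow> (nat set set \<times> (nat \<times> nat) set set) set" where
  "pdCGs \<tau> V = {G. pdCG \<tau> V G}"

end

theory Submission
  imports Defs
begin

(* A pdCG is a pair of a partition of V and a partition of some edge set E, both with classes
   that are singletons or two-element tau-orbits. Such partitions are counted orbit by orbit:
   a partition never mixes two orbits of an involution, so it is the union of independent
   choices on each orbit. A vertex orbit {i, tau i} is one class or two singletons (2 choices);
   the edge (i, tau i) is fixed by tau and is absent or a singleton (2 choices); a two-element
   edge orbit {e, tau e} admits 5 choices. For p = 2h there are h vertex orbits, h fixed edges
   and h(h - 1) two-element edge orbits, so the count is 2^h * 2^h * 5^(h(h-1)); the binomial
   theorem for 5 = 1 + 4 turns 2^h * 5^(h(h-1)) into the stated sum. *)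

definition involution_on :: "'a set \<Rightarrow> ('a \<Rightarrow> 'a) \<Rightarrow> bool" where
  "involution_on S \<sigma> \<longleftrightarrow> (\<forall>s\<in>S. \<sigma> s \<in> S \<and> \<sigma> (\<sigma> s) = s)"

definition orbit_classes :: "('a \<Rightarrow> 'a) \<Rightarrow> 'a set set \<Rightarrow> bool" where
  "orbit_classes \<sigma> Q \<longleftrightarrow> (\<forall>c\<in>Q. (\<exists>e. c = {e}) \<or> (\<exists>e. c = {e, \<sigma> e} \<and> e \<noteq> \<sigma> e))"

text \<open>With \<open>cover\<close> these are the partitions of \<open>S\<close> (vertex colourings); without it, the
  partitions of arbitrary subsets of \<open>S\<close> (edge colourings, whose edge set is not fixed).\<close>

definition orbit_partitions :: "bool \<Rightarrow> ('a \<Rightarrow> 'a) \<Rightarrow> 'a set \<Rightarrow> 'a set set set" where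
  "orbit_partitions cover \<sigma> S =
     {Q. \<Union>Q \<subseteq> S \<and> (cover \<longrightarrow> \<Union>Q = S) \<and> disjoint Q \<and> orbit_classes \<sigma> Q}"

lemma orbit_classes_nonempty: "orbit_classes \<sigma> Q \<Longrightarrow> {} \<notin> Q"
  unfolding orbit_classes_def by auto

lemma orbit_classes_subset: "orbit_classes \<sigma> Q \<Longrightarrow> Q' \<subseteq> Q \<Longrightarrow> orbit_classes \<sigma> Q'"
  unfolding orbit_classes_def by blast

lemma orbit_classes_Un: "orbit_classes \<sigma> A \<Longrightarrow> orbit_classes \<sigma> B \<Longrightarrow> orbit_classes \<sigma> (A \<union> B)"
  unfolding orbit_classes_def by blast

lemma orbit_partitions_classes:
  "Q \<in> orbit_partitions cover \<sigma> S \<Longrightarrow> Q \<subseteq> Pow S - {{}}"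
  unfolding orbit_partitions_def by (blast dest: orbit_classes_nonempty)

lemma orbit_partitions_True:
  "orbit_partitions True \<sigma> S = {Q \<in> orbit_partitions False \<sigma> S. \<Union>Q = S}"
  unfolding orbit_partitions_def by auto

lemma orbit_partitions_empty: "orbit_partitions cover \<sigma> {} = {{}}"
proof (intro equalityI subsetI)
  fix Q assume "Q \<in> orbit_partitions cover \<sigma> {}"
  then show "Q \<in> {{}}" using orbit_partitions_classes by fastforce
qed (simp add: orbit_partitions_def orbit_classes_def)

lemma orbit_partitions_singleton:
  "orbit_partitions cover \<sigma> {x} = (if cover then {{{x}}} else {{}, {{x}}})"
proof (intro equalityI subsetI)
  fix Q assume Q: "Q \<in> orbit_partitions cover \<sigma> {x}"
  have "Pow {x} - {{}} = {{x}}" by auto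
  with orbit_partitions_classes[OF Q] have "Q \<subseteq> {{x}}" by simp
  then have "Q = {} \<or> Q = {{x}}" by (simp add: subset_singleton_iff)
  with Q show "Q \<in> (if cover then {{{x}}} else {{}, {{x}}})"
    by (auto simp: orbit_partitions_def)
next
  fix Q assume "Q \<in> (if cover then {{{x}}} else {{}, {{x}}})"
  then show "Q \<in> orbit_partitions cover \<sigma> {x}"
    by (auto simp: orbit_partitions_def orbit_classes_def split: if_splits)
qed

lemma orbit_partitions_doubleton:
  assumes xy: "x \<noteq> y" and \<sigma>: "\<sigma> x = y"
  shows "orbit_partitions False \<sigma> {x, y} = {{}, {{x}}, {{y}}, {{x}, {y}}, {{x, y}}}"
proof (intro equalityI subsetI)
  fix Q assume Q: "Q \<in> orbit_partitions False \<sigma> {x, y}"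
  have "Pow {x, y} - {{}} = {{x}, {y}, {x, y}}" by auto
  with orbit_partitions_classes[OF Q] have sub: "Q \<subseteq> {{x}, {y}, {x, y}}" by simp
  show "Q \<in> {{}, {{x}}, {{y}}, {{x}, {y}}, {{x, y}}}"
  proof (cases "{x, y} \<in> Q")
    case True
    have "disjoint Q" using Q by (simp add: orbit_partitions_def)
    moreover have "{x} \<inter> {x, y} \<noteq> {}" "{y} \<inter> {x, y} \<noteq> {}" "{x} \<noteq> {x, y}" "{y} \<noteq> {x, y}"
      using xy by auto
    ultimately have "{x} \<notin> Q" "{y} \<notin> Q" using True by (auto dest: pairwiseD simp: disjnt_def)
    with sub True have "Q = {{x, y}}" by blast
    then show ?thesis by simp
  next
    case False
    with sub have "Q \<in> Pow {{x}, {y}}" by blast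
    also have "Pow {{x}, {y}} = {{}, {{x}}, {{y}}, {{x}, {y}}}" by (auto simp: Pow_insert)
    finally show ?thesis by blast
  qed
next
  fix Q assume Q: "Q \<in> {{}, {{x}}, {{y}}, {{x}, {y}}, {{x, y}}}"
  have "orbit_classes \<sigma> {{x}, {y}, {x, y}}"
    using xy \<sigma> unfolding orbit_classes_def by blast
  with Q have "orbit_classes \<sigma> Q" by (auto elim: orbit_classes_subset)
  moreover have "disjoint Q" "\<Union>Q \<subseteq> {x, y}" using Q xy by (auto simp: pairwise_insert disjnt_def)
  ultimately show "Q \<in> orbit_partitions False \<sigma> {x, y}" by (simp add: orbit_partitions_def)
qed

lemma card_orbit_partitions_singleton:
  "card (orbit_partitions cover \<sigma> {x}) = (if cover then 1 else 2)"
  by (simp add: orbit_partitions_singleton)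

lemma card_orbit_partitions_doubleton:
  assumes "x \<noteq> y" "\<sigma> x = y"
  shows "card (orbit_partitions cover \<sigma> {x, y}) = (if cover then 2 else 5)"
proof -
  have "{x} \<noteq> {y}" "{x} \<noteq> {x, y}" "{y} \<noteq> {x, y}" using assms(1) by auto
  moreover have "{Q \<in> {{}, {{x}}, {{y}}, {{x}, {y}}, {{x, y}}}. \<Union>Q = {x, y}} = {{{x}, {y}}, {{x, y}}}"
    using assms(1) by auto
  ultimately show ?thesis
    using assms by (cases cover) (simp_all add: orbit_partitions_True orbit_partitions_doubleton)
qed

lemma orbit_partitions_Un:
  assumes A: "A \<in> orbit_partitions cover \<sigma> T" and B: "B \<in> orbit_partitions cover \<sigma> U"
    and TU: "T \<inter> U = {}"
  shows "A \<union> B \<in> orbit_partitions cover \<sigma> (T \<union> U)"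
proof -
  have "\<Union>A \<inter> \<Union>B = {}" using A B TU by (auto simp: orbit_partitions_def)
  with A B have "disjoint (A \<union> B)" by (intro disjoint_union) (simp_all add: orbit_partitions_def)
  with A B show ?thesis by (auto simp: orbit_partitions_def intro: orbit_classes_Un)
qed

lemma orbit_partitions_restrict:
  assumes Q: "Q \<in> orbit_partitions cover \<sigma> (T \<union> U)"
    and TU: "T \<inter> U = {}" and split: "\<And>c. c \<in> Q \<Longrightarrow> c \<subseteq> T \<or> c \<subseteq> U"
  shows "{c \<in> Q. c \<subseteq> T} \<in> orbit_partitions cover \<sigma> T"
proof -
  have QS: "\<Union>Q \<subseteq> T \<union> U" "cover \<longrightarrow> \<Union>Q = T \<union> U" "disjoint Q" "orbit_classes \<sigma> Q"
    using Q by (simp_all add: orbit_partitions_def)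
  have "T \<subseteq> \<Union>{c \<in> Q. c \<subseteq> T}" if cover
  proof
    fix t assume "t \<in> T"
    with QS(2) that obtain c where c: "c \<in> Q" "t \<in> c" by blast
    with split[OF \<open>c \<in> Q\<close>] TU \<open>t \<in> T\<close> have "c \<subseteq> T" by blast
    with c show "t \<in> \<Union>{c \<in> Q. c \<subseteq> T}" by blast
  qed
  moreover have "disjoint {c \<in> Q. c \<subseteq> T}" "orbit_classes \<sigma> {c \<in> Q. c \<subseteq> T}"
    using QS(3,4) by (auto intro: pairwise_subset orbit_classes_subset)
  moreover have "\<Union>{c \<in> Q. c \<subseteq> T} \<subseteq> T" by blast
  ultimately show ?thesis unfolding orbit_partitions_def by blast
qed

lemma bij_betw_orbit_partitions_Un:
  assumes TU: "T \<inter> U = {}"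
    and split: "\<And>Q c. Q \<in> orbit_partitions cover \<sigma> (T \<union> U) \<Longrightarrow> c \<in> Q \<Longrightarrow> c \<subseteq> T \<or> c \<subseteq> U"
  shows "bij_betw (\<lambda>(A, B). A \<union> B)
    (orbit_partitions cover \<sigma> T \<times> orbit_partitions cover \<sigma> U) (orbit_partitions cover \<sigma> (T \<union> U))"
proof -
  let ?restrict = "\<lambda>Q. ({c \<in> Q. c \<subseteq> T}, {c \<in> Q. c \<subseteq> U})"
  have restrict_Un: "?restrict ((\<lambda>(A, B). A \<union> B) P) = P"
    if P: "P \<in> orbit_partitions cover \<sigma> T \<times> orbit_partitions cover \<sigma> U" for P
  proof -
    obtain A B where AB: "P = (A, B)" "A \<in> orbit_partitions cover \<sigma> T" "B \<in> orbit_partitions cover \<sigma> U"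
      using P by blast
    from AB have "A \<subseteq> Pow T - {{}}" "B \<subseteq> Pow U - {{}}" by (simp_all add: orbit_partitions_classes)
    with TU have "{c \<in> A \<union> B. c \<subseteq> T} = A" "{c \<in> A \<union> B. c \<subseteq> U} = B" by blast+
    with AB show ?thesis by simp
  qed
  have Un_restrict: "{c \<in> Q. c \<subseteq> T} \<union> {c \<in> Q. c \<subseteq> U} = Q"
    if "Q \<in> orbit_partitions cover \<sigma> (T \<union> U)" for Q
    using split[OF that] by blast
  have restrict_in: "?restrict Q \<in> orbit_partitions cover \<sigma> T \<times> orbit_partitions cover \<sigma> U"
    if "Q \<in> orbit_partitions cover \<sigma> (T \<union> U)" for Q
  proof -
    have "Q \<in> orbit_partitions cover \<sigma> (U \<union> T)" "U \<inter> T = {}"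
      using that TU by (simp_all add: Un_commute Int_commute)
    then have "{c \<in> Q. c \<subseteq> U} \<in> orbit_partitions cover \<sigma> U"
      using split[OF that] by (intro orbit_partitions_restrict) blast+
    with orbit_partitions_restrict[OF that TU split[OF that]] show ?thesis by simp
  qed
  show ?thesis
  proof (rule bij_betw_byWitness[where f' = ?restrict])
    show "\<forall>Q \<in> orbit_partitions cover \<sigma> (T \<union> U). (\<lambda>(A, B). A \<union> B) (?restrict Q) = Q"
      by (simp add: Un_restrict)
    show "?restrict ` orbit_partitions cover \<sigma> (T \<union> U)
        \<subseteq> orbit_partitions cover \<sigma> T \<times> orbit_partitions cover \<sigma> U"
      using restrict_in by blast
    show "\<forall>P \<in> orbit_partitions cover \<sigma> T \<times> orbit_partitions cover \<sigma> U. ?restrict ((\<lambda>(A, B). A \<union> B) P) = P"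
      using restrict_Un by blast
    show "(\<lambda>(A, B). A \<union> B) ` (orbit_partitions cover \<sigma> T \<times> orbit_partitions cover \<sigma> U)
        \<subseteq> orbit_partitions cover \<sigma> (T \<union> U)"
      using orbit_partitions_Un[OF _ _ TU] by auto
  qed
qed

lemma involution_on_avoids_orbit:
  assumes \<sigma>: "involution_on S \<sigma>" and "x \<in> S" "e \<in> S" "e \<notin> {x, \<sigma> x}"
  shows "\<sigma> e \<notin> {x, \<sigma> x}"
proof -
  have "\<sigma> (\<sigma> e) = e" "\<sigma> (\<sigma> x) = x" using assms by (simp_all add: involution_on_def)
  with \<open>e \<notin> {x, \<sigma> x}\<close> show ?thesis by auto
qed

lemma card_orbit_partitions_remove_orbit:
  assumes \<sigma>: "involution_on S \<sigma>" and x: "x \<in> S"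
  shows "card (orbit_partitions cover \<sigma> S) =
    card (orbit_partitions cover \<sigma> (S - {x, \<sigma> x})) * card (orbit_partitions cover \<sigma> {x, \<sigma> x})"
proof -
  have S: "(S - {x, \<sigma> x}) \<union> {x, \<sigma> x} = S" using \<sigma> x by (auto simp: involution_on_def)
  have "c \<subseteq> S - {x, \<sigma> x} \<or> c \<subseteq> {x, \<sigma> x}" if "Q \<in> orbit_partitions cover \<sigma> S" "c \<in> Q" for Q c
  proof -
    have "c \<subseteq> S" "orbit_classes \<sigma> Q" using that by (auto simp: orbit_partitions_def)
    with that(2) obtain e where "e \<in> S" and c: "c = {e} \<or> c = {e, \<sigma> e}"
      unfolding orbit_classes_def by blast
    show ?thesis
    proof (cases "e \<in> {x, \<sigma> x}")
      case True
      moreover have "\<sigma> (\<sigma> x) = x" using \<sigma> x by (simp add: involution_on_def)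
      ultimately show ?thesis using c by auto
    next
      case False
      with involution_on_avoids_orbit[OF \<sigma> x \<open>e \<in> S\<close>] c \<open>c \<subseteq> S\<close> show ?thesis by auto
    qed
  qed
  then have "bij_betw (\<lambda>(A, B). A \<union> B)
      (orbit_partitions cover \<sigma> (S - {x, \<sigma> x}) \<times> orbit_partitions cover \<sigma> {x, \<sigma> x})
      (orbit_partitions cover \<sigma> S)"
    using bij_betw_orbit_partitions_Un[of "S - {x, \<sigma> x}" "{x, \<sigma> x}" cover \<sigma>] by (simp only: S) blast
  then show ?thesis by (metis bij_betw_same_card card_cartesian_product)
qed

lemma involution_on_remove_orbit:
  assumes \<sigma>: "involution_on S \<sigma>" and x: "x \<in> S"
  shows "involution_on (S - {x, \<sigma> x}) \<sigma>"
  using involution_on_avoids_orbit[OF \<sigma> x] \<sigma> by (auto simp: involution_on_def)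

lemma card_orbit_partitions:
  assumes "finite S" "involution_on S \<sigma>" "card {s \<in> S. \<sigma> s \<noteq> s} = 2 * k"
  shows "card (orbit_partitions cover \<sigma> S) =
    (if cover then 1 else 2) ^ card {s \<in> S. \<sigma> s = s} * (if cover then 2 else 5) ^ k"
  using assms
proof (induction "card S" arbitrary: S k rule: less_induct)
  case less
  show ?case
  proof (cases "S = {}")
    case True
    with less.prems show ?thesis by (simp add: orbit_partitions_empty)
  next
    case False
    then obtain x where x: "x \<in> S" by blast
    let ?S' = "S - {x, \<sigma> x}"
    have "card ?S' < card S" using less.prems(1) x by (intro psubset_card_mono) auto
    note IH = less.hyps[OF this _ involution_on_remove_orbit[OF less.prems(2) x]]
    note product = card_orbit_partitions_remove_orbit[OF less.prems(2) x, of cover]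
    show ?thesis
    proof (cases "\<sigma> x = x")
      case True
      have "{s \<in> ?S'. \<sigma> s \<noteq> s} = {s \<in> S. \<sigma> s \<noteq> s}" using True by auto
      moreover have "{s \<in> S. \<sigma> s = s} = insert x {s \<in> ?S'. \<sigma> s = s}" using True x by auto
      moreover have "finite {s \<in> ?S'. \<sigma> s = s}" using less.prems(1) by simp
      ultimately show ?thesis
        using IH[of k] less.prems product True by (simp add: card_orbit_partitions_singleton)
    next
      case False
      have fixed: "{s \<in> ?S'. \<sigma> s = s} = {s \<in> S. \<sigma> s = s}"
        using False less.prems(2) x by (auto simp: involution_on_def)
      let ?N = "{s \<in> S. \<sigma> s \<noteq> s}"
      have O: "{x, \<sigma> x} \<subseteq> ?N" using False less.prems(2) x by (auto simp: involution_on_def)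
      have "card {x, \<sigma> x} = 2" using False by simp
      moreover have "card {x, \<sigma> x} \<le> card ?N" using O less.prems(1) by (intro card_mono) auto
      ultimately obtain k' where k: "k = Suc k'" using less.prems(3) by (cases k) auto
      have "{s \<in> ?S'. \<sigma> s \<noteq> s} = ?N - {x, \<sigma> x}" by auto
      with O \<open>card {x, \<sigma> x} = 2\<close> less.prems(1,3)
      have "card {s \<in> ?S'. \<sigma> s \<noteq> s} = 2 * k'" using k by (simp add: card_Diff_subset)
      with IH[of k'] less.prems(1) product fixed False k show ?thesis
        by (simp add: card_orbit_partitions_doubleton)
    qed
  qed
qed

lemma card_fixpoint_free_involution:
  fixes \<sigma> :: "'a::linorder \<Rightarrow> 'a"
  assumes "finite S" "involution_on S \<sigma>" "\<And>s. s \<in> S \<Longrightarrow> \<sigma> s \<noteq> s"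
  shows "card S = 2 * card {s \<in> S. s < \<sigma> s}"
proof -
  let ?lower = "{s \<in> S. s < \<sigma> s}" and ?upper = "{s \<in> S. \<sigma> s < s}"
  have "S = ?lower \<union> ?upper" using assms(3) by (auto simp: neq_iff)
  moreover have "?lower \<inter> ?upper = {}" by auto
  ultimately have "card S = card ?lower + card ?upper"
    using assms(1) by (metis card_Un_disjoint finite_Un)
  moreover have "bij_betw \<sigma> ?lower ?upper"
    using assms(2) by (intro bij_betw_byWitness[where f' = \<sigma>]) (auto simp: involution_on_def)
  ultimately show ?thesis by (simp add: bij_betw_same_card)
qed

lemma twin_pairing_involution: "twin_pairing V \<tau> \<Longrightarrow> involution_on V \<tau>"
  by (simp add: twin_pairing_def involution_on_def)

lemma twin_pairing_no_fixpoint: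
  assumes "twin_pairing V \<tau>" "i \<in> V"
  shows "\<tau> i \<noteq> i"
proof -
  obtain L R where LR: "L \<union> R = V" "L \<inter> R = {}" "\<tau> ` L = R"
    using assms(1) by (auto simp: twin_pairing_def)
  show ?thesis
  proof (cases "i \<in> L")
    case True
    then have "\<tau> i \<in> R" using LR(3) by blast
    with True LR(2) show ?thesis by auto
  next
    case False
    then have "i \<in> R" using LR(1) assms(2) by blast
    then obtain l where "l \<in> L" "i = \<tau> l" using LR(3) by blast
    moreover have "\<tau> (\<tau> l) = l" using assms(1) LR \<open>l \<in> L\<close> by (auto simp: twin_pairing_def)
    ultimately show ?thesis using False by auto
  qed
qed

lemma involution_on_tau_edge:
  assumes \<tau>: "involution_on V \<tau>"
  shows "involution_on (F_V V) (tau_edge \<tau>)"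
  unfolding involution_on_def
proof
  fix e assume "e \<in> F_V V"
  then obtain i j where ij: "e = (i, j)" "i \<in> V" "j \<in> V" "i < j" by (auto simp: F_V_def)
  with \<tau> have "\<tau> i \<in> V" "\<tau> j \<in> V" "\<tau> (\<tau> i) = i" "\<tau> (\<tau> j) = j"
    by (auto simp: involution_on_def)
  moreover from this ij have "\<tau> i \<noteq> \<tau> j" by auto
  ultimately show "tau_edge \<tau> e \<in> F_V V \<and> tau_edge \<tau> (tau_edge \<tau> e) = e"
    using ij by (cases "\<tau> i < \<tau> j") (auto simp: tau_edge_def F_V_def min_def max_def)
qed

lemma tau_edge_fixpoints:
  assumes \<tau>: "involution_on V \<tau>" and no_fix: "\<And>i. i \<in> V \<Longrightarrow> \<tau> i \<noteq> i"
  shows "{e \<in> F_V V. tau_edge \<tau> e = e} = (\<lambda>i. (i, \<tau> i)) ` {i \<in> V. i < \<tau> i}"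
proof (intro equalityI subsetI)
  fix e assume e: "e \<in> {e \<in> F_V V. tau_edge \<tau> e = e}"
  then obtain i j where ij: "e = (i, j)" "i \<in> V" "j \<in> V" "i < j" by (auto simp: F_V_def)
  with e have "min (\<tau> i) (\<tau> j) = i" "max (\<tau> i) (\<tau> j) = j" by (simp_all add: tau_edge_def)
  with no_fix[OF \<open>i \<in> V\<close>] have "\<tau> i = j" by (auto simp: min_def max_def split: if_splits)
  with ij show "e \<in> (\<lambda>i. (i, \<tau> i)) ` {i \<in> V. i < \<tau> i}" by auto
next
  fix e assume "e \<in> (\<lambda>i. (i, \<tau> i)) ` {i \<in> V. i < \<tau> i}"
  with \<tau> show "e \<in> {e \<in> F_V V. tau_edge \<tau> e = e}"
    by (auto simp: involution_on_def F_V_def tau_edge_def)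
qed

lemma card_F_V:
  assumes "finite V"
  shows "card (F_V V) = card V choose 2"
proof -
  have "bij_betw (\<lambda>(i, j). {i, j}) (F_V V) {A. A \<subseteq> V \<and> card A = 2}"
  proof (rule bij_betw_byWitness[where f' = "\<lambda>A. (Min A, Max A)"])
    show "\<forall>e \<in> F_V V. (\<lambda>A. (Min A, Max A)) ((\<lambda>(i, j). {i, j}) e) = e"
      by (auto simp: F_V_def)
    show "\<forall>A \<in> {A. A \<subseteq> V \<and> card A = 2}. (\<lambda>(i, j). {i, j}) (Min A, Max A) = A"
      by (auto simp: card_2_iff)
    show "(\<lambda>(i, j). {i, j}) ` F_V V \<subseteq> {A. A \<subseteq> V \<and> card A = 2}"
      by (auto simp: F_V_def)
    show "(\<lambda>A. (Min A, Max A)) ` {A. A \<subseteq> V \<and> card A = 2} \<subseteq> F_V V"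
      by (auto simp: F_V_def card_2_iff)
  qed
  then show ?thesis by (simp add: bij_betw_same_card n_subsets assms)
qed

lemma pdCG_iff_orbit_partitions:
  "pdCG \<tau> V (P, Q) \<longleftrightarrow>
    P \<in> orbit_partitions True \<tau> V \<and> Q \<in> orbit_partitions False (tau_edge \<tau>) (F_V V)"
proof -
  have "pdCG \<tau> V (P, Q) \<longleftrightarrow> (partition_on V P \<and> orbit_classes \<tau> P) \<and>
      ((\<exists>E. E \<subseteq> F_V V \<and> partition_on E Q) \<and> orbit_classes (tau_edge \<tau>) Q)"
    by (auto simp: pdCG_def coloured_graph_def orbit_classes_def)
  also have "\<dots> \<longleftrightarrow> P \<in> orbit_partitions True \<tau> V \<and> Q \<in> orbit_partitions False (tau_edge \<tau>) (F_V V)"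
    by (auto simp: partition_on_def orbit_partitions_def dest: orbit_classes_nonempty)
  finally show ?thesis .
qed

lemma pdCGs_eq_orbit_partitions:
  "pdCGs \<tau> V = orbit_partitions True \<tau> V \<times> orbit_partitions False (tau_edge \<tau>) (F_V V)"
  by (auto simp: pdCGs_def pdCG_iff_orbit_partitions)

lemma double_choose_two: "(2 * h choose 2) = h + 2 * (h * (h - 1))"
  by (cases h) (simp_all add: choose_two algebra_simps)

lemma card_pdCGs:
  assumes V: "finite V" and \<tau>: "twin_pairing V \<tau>" and h: "card V = 2 * h"
  shows "card (pdCGs \<tau> V) = 2 ^ h * (2 ^ h * 5 ^ (h * (h - 1)))"
proof -
  have inv: "involution_on V \<tau>" by (rule twin_pairing_involution[OF \<tau>])
  have no_fix: "\<And>i. i \<in> V \<Longrightarrow> \<tau> i \<noteq> i" by (rule twin_pairing_no_fixpoint[OF \<tau>])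
  have "{i \<in> V. \<tau> i \<noteq> i} = V" "{i \<in> V. \<tau> i = i} = {}" using no_fix by auto
  then have vertices: "card (orbit_partitions True \<tau> V) = 2 ^ h"
    using card_orbit_partitions[OF V inv, of h True] h by simp
  let ?E = "F_V V" and ?Fix = "{e \<in> F_V V. tau_edge \<tau> e = e}"
  have "finite ?E" by (rule finite_subset[of _ "V \<times> V"]) (auto simp: F_V_def V)
  have "inj_on (\<lambda>i. (i, \<tau> i)) {i \<in> V. i < \<tau> i}" by (rule inj_onI) simp
  then have "card ?Fix = h"
    using tau_edge_fixpoints[OF inv no_fix] card_fixpoint_free_involution[OF V inv no_fix] h
    by (simp add: card_image)
  moreover have "card ?E = h + 2 * (h * (h - 1))"
    using card_F_V[OF V] h by (simp add: double_choose_two)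
  moreover have "{e \<in> ?E. tau_edge \<tau> e \<noteq> e} = ?E - ?Fix" by auto
  ultimately have "card {e \<in> ?E. tau_edge \<tau> e \<noteq> e} = 2 * (h * (h - 1))"
    using \<open>finite ?E\<close> by (simp add: card_Diff_subset)
  then have edges: "card (orbit_partitions False (tau_edge \<tau>) ?E) = 2 ^ h * 5 ^ (h * (h - 1))"
    using card_orbit_partitions[OF \<open>finite ?E\<close> involution_on_tau_edge[OF inv], of _ False] \<open>card ?Fix = h\<close>
    by simp
  show ?thesis
    by (simp add: pdCGs_eq_orbit_partitions card_cartesian_product vertices edges)
qed

lemma sum_choose_power2_eq_power5:
  "(\<Sum>i = 0..m. (m choose i) * 2 ^ (n + 2 * m - 2 * i)) = (2::nat) ^ n * 5 ^ m"
proof -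
  have "(\<Sum>i = 0..m. (m choose i) * 2 ^ (n + 2 * m - 2 * i)) =
      (\<Sum>i\<le>m. 2 ^ n * ((m choose i) * 4 ^ (m - i)))"
  proof (rule sum.cong)
    fix i assume "i \<in> {..m}"
    then have "n + 2 * m - 2 * i = n + 2 * (m - i)" by auto
    then show "(m choose i) * 2 ^ (n + 2 * m - 2 * i) = 2 ^ n * ((m choose i) * 4 ^ (m - i))"
      by (simp add: power_add power_mult)
  qed (simp add: atLeast0AtMost)
  also have "\<dots> = 2 ^ n * (1 + 4) ^ m"
    using binomial_ring[of "1::nat" 4 m] by (simp add: sum_distrib_left)
  finally show ?thesis by simp
qed

theorem mainTheorem9:
  fixes p :: nat and \<tau> :: "nat \<Rightarrow> nat"
  assumes "even p"
    and "twin_pairing {1..p} \<tau>"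
  shows "card (pdCGs \<tau> {1..p}) =
    2 ^ (p div 2) *
    (\<Sum>i = 0..p * (p - 2) div 4. (p * (p - 2) div 4 choose i) * 2 ^ ((p choose 2) - 2 * i))"
proof -
  obtain h where p: "p = 2 * h" using assms(1) by (rule evenE)
  have "p * (p - 2) div 4 = h * (h - 1)" unfolding p by (cases h) (simp_all add: algebra_simps)
  moreover have "p choose 2 = h + 2 * (h * (h - 1))" unfolding p by (rule double_choose_two)
  moreover have "card (pdCGs \<tau> {1..p}) = 2 ^ h * (2 ^ h * 5 ^ (h * (h - 1)))"
    using card_pdCGs[OF _ assms(2)] p by simp
  ultimately show ?thesis using p by (simp add: sum_choose_power2_eq_power5)
qed

end
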